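(* Let $\mathcal H$ be a separable complex Hilbert space, $A\in L(\mathcal H)^+$, $\mathcal S\subseteq\mathcal H$ a closed subspace, and let $T\in L(\mathcal H)$ satisfy $R(T)\subseteq\mathcal S$. The following are equivalent: (1) $T$ is an $A$-projection into $\mathcal S$; (2) $AT=T^*A$ and $ATP_{\mathcal S}=AP_{\mathcal S}$; (3) $P_{\mathcal S}AT=P_{\mathcal S}A$.
   Context: $L(\mathcal H)$ denotes bounded linear operators on $\mathcal H$, $L(\mathcal H)^+$ the positive (semidefinite) ones, $R(\cdot)$ the range, and $P_{\mathcal S}$ the orthogonal projection onto $\mathcal S$. For $A\in L(\mathcal H)^+$, $\|x\|_A=\langle Ax,x\rangle^{1/2}$. An operator $T\in L(\mathcal H)$ is an $A$-projection into $\mathcal S$ if $R(T)\subseteq\mathcal S$ and $\|y-Ty\|_A\le\|y-s\|_A$ for all $y\in\mathcal H$ and all $s\in\mathcal S$. *)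

theory Defs
  imports "HOL-Analysis.Analysis"
begin

text \<open>The distribution has no complex vector spaces, so we introduce them as a type class
  on top of the real normed vector space structure: a complex scalar multiplication compatible
  with the real one, and a complex inner product (linear in the first argument, conjugate
  linear in the second) inducing the norm.\<close>

class complex_inner = real_normed_vector +
  fixes scaleC :: "complex \<Rightarrow> 'a \<Rightarrow> 'a" (infixr \<open>*\<^sub>C\<close> 75)
    and cinner :: "'a \<Rightarrow> 'a \<Rightarrow> complex"
  assumes scaleC_add_right: "a *\<^sub>C (x + y) = a *\<^sub>C x + a *\<^sub>C y"
    and scaleC_add_left: "(a + b) *\<^sub>C x = a *\<^sub>C x + b *\<^sub>C x"
    and scaleC_scaleC: "a *\<^sub>C (b *\<^sub>C x) = (a * b) *\<^sub>C x"
    and scaleC_one: "1 *\<^sub>C x = x"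
    and scaleR_scaleC: "scaleR r x = complex_of_real r *\<^sub>C x"
    and cinner_add_left: "cinner (x + y) z = cinner x z + cinner y z"
    and cinner_scaleC_left: "cinner (a *\<^sub>C x) y = a * cinner x y"
    and cinner_commute: "cinner y x = cnj (cinner x y)"
    and cinner_self_nonneg: "0 \<le> Re (cinner x x)"
    and cinner_self_eq_zero: "cinner x x = 0 \<longleftrightarrow> x = 0"
    and norm_eq_sqrt_cinner: "norm x = sqrt (Re (cinner x x))"

class complex_hilbert = complex_inner + complete_space

definition clinear :: "('a::complex_inner \<Rightarrow> 'b::complex_inner) \<Rightarrow> bool" where
  "clinear T \<longleftrightarrow> (\<forall>x y. T (x + y) = T x + T y) \<and> (\<forall>c x. T (c *\<^sub>C x) = c *\<^sub>C T x)"

definition bounded_clinear :: "('a::complex_inner \<Rightarrow> 'b::complex_inner) \<Rightarrow> bool" where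
  "bounded_clinear T \<longleftrightarrow> clinear T \<and> (\<exists>K. \<forall>x. norm (T x) \<le> norm x * K)"

definition cadjoint :: "('a::complex_inner \<Rightarrow> 'a) \<Rightarrow> ('a \<Rightarrow> 'a)" where
  "cadjoint T = (THE S. \<forall>x y. cinner (T x) y = cinner x (S y))"

definition positive_op :: "('a::complex_inner \<Rightarrow> 'a) \<Rightarrow> bool" where
  "positive_op A \<longleftrightarrow> bounded_clinear A \<and> (\<forall>x. Im (cinner (A x) x) = 0 \<and> 0 \<le> Re (cinner (A x) x))"

definition csubspace :: "'a::complex_inner set \<Rightarrow> bool" where
  "csubspace S \<longleftrightarrow> 0 \<in> S \<and> (\<forall>x\<in>S. \<forall>y\<in>S. x + y \<in> S) \<and> (\<forall>c. \<forall>x\<in>S. c *\<^sub>C x \<in> S)"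

definition cproj :: "'a::complex_inner set \<Rightarrow> 'a \<Rightarrow> 'a" where
  "cproj S x = (THE p. p \<in> S \<and> (\<forall>s\<in>S. cinner (x - p) s = 0))"

definition A_norm :: "('a::complex_inner \<Rightarrow> 'a) \<Rightarrow> 'a \<Rightarrow> real" where
  "A_norm A x = sqrt (Re (cinner (A x) x))"

definition A_projection :: "('a::complex_inner \<Rightarrow> 'a) \<Rightarrow> 'a set \<Rightarrow> ('a \<Rightarrow> 'a) \<Rightarrow> bool" where
  "A_projection A S T \<longleftrightarrow> bounded_clinear T \<and> range T \<subseteq> S \<and>
     (\<forall>y. \<forall>s\<in>S. A_norm A (y - T y) \<le> A_norm A (y - s))"

end

theory Submission
  imports Defs
begin

text \<open>For a positive \<open>A\<close> and a subspace \<open>S\<close>, a vector \<open>e\<close> minimises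
  \<open>s \<mapsto> \<parallel>e + s\<parallel>\<^sub>A\<close> over \<open>S\<close> iff \<open>\<langle>A e, s\<rangle> = 0\<close> for all \<open>s \<in> S\<close>: expanding
  \<open>\<parallel>e + t s\<parallel>\<^sub>A\<^sup>2\<close> in the complex scalar \<open>t\<close>, the linear term must vanish. Since \<open>T y \<in> S\<close>,
  \<open>T\<close> is therefore an \<open>A\<close>-projection iff every residual \<open>y - T y\<close> is \<open>A\<close>-orthogonal to
  \<open>S\<close>. Condition (3) says the same, because \<open>P\<^sub>S u = P\<^sub>S v\<close> iff \<open>u - v \<perp> S\<close>.
  For (2), \<open>A\<close>-orthogonality of the residuals makes \<open>\<langle>A T x, y\<rangle> = \<langle>A x, T y\<rangle>\<close>, i.e.
  \<open>A T = T\<^sup>* A\<close>, and gives \<open>\<langle>A w, w\<rangle> = 0\<close>, hence \<open>A w = 0\<close>, for \<open>w = s - T s\<close> with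
  \<open>s \<in> S\<close>; conversely these two identities give back the orthogonality.
  Existence of \<open>P\<^sub>S\<close> and \<open>T\<^sup>*\<close> comes from the nearest-point theorem (the parallelogram law
  makes minimising sequences Cauchy) and the Riesz representation theorem.\<close>

section \<open>Complex inner product spaces\<close>

lemma cinner_zero_left [simp]: "cinner 0 x = 0"
  using cinner_add_left[of 0 0 x] by simp

lemma cinner_minus_left: "cinner (- x) y = - cinner x y"
  using cinner_add_left[of x "- x" y] by (simp add: eq_neg_iff_add_eq_0 add.commute)

lemma cinner_diff_left: "cinner (x - y) z = cinner x z - cinner y z"
  using cinner_add_left[of x "- y" z] by (simp add: cinner_minus_left)

lemma cinner_add_right: "cinner x (y + z) = cinner x y + cinner x z"
  by (metis cinner_commute cinner_add_left complex_cnj_add)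

lemma cinner_diff_right: "cinner x (y - z) = cinner x y - cinner x z"
  by (metis cinner_commute cinner_diff_left complex_cnj_diff)

lemma cinner_zero_right [simp]: "cinner x 0 = 0"
  by (metis cinner_commute cinner_zero_left complex_cnj_zero)

lemma cinner_scaleC_right: "cinner x (a *\<^sub>C y) = cnj a * cinner x y"
  by (metis cinner_commute cinner_scaleC_left complex_cnj_mult)

lemma scaleC_minus1_left: "(- 1) *\<^sub>C x = - x"
  by (metis scaleR_scaleC scaleR_minus1_left of_real_1 of_real_minus)

lemma power2_norm_eq_cinner: "(norm x)\<^sup>2 = Re (cinner x x)"
  by (simp add: norm_eq_sqrt_cinner cinner_self_nonneg)

lemma cinner_left_ext: "(\<And>y. cinner x y = cinner z y) \<Longrightarrow> x = z"
  by (metis cinner_diff_left cinner_self_eq_zero right_minus_eq)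

lemma cinner_add_scaleC:
  "cinner (a + t *\<^sub>C b) (u + t *\<^sub>C v)
     = cinner a u + cnj t * cinner a v + t * cinner b u + t * cnj t * cinner b v"
  by (simp add: cinner_add_left cinner_add_right cinner_scaleC_left cinner_scaleC_right
      algebra_simps)

lemma Re_quadratic_expand:
  "Re (q + cnj t * b + t * cnj b + t * cnj t * c) = Re q + 2 * Re (cnj t * b) + (cmod t)\<^sup>2 * Re c"
  by (simp add: cmod_power2 algebra_simps) (simp add: power2_eq_square algebra_simps)

lemma first_variation_nonneg_imp_zero:
  fixes a :: complex and c :: real
  assumes "c \<ge> 0" and nonneg: "\<And>t. 0 \<le> 2 * Re (cnj t * a) + (cmod t)\<^sup>2 * c"
  shows "a = 0"
proof -
  define r where "r = 1 / (c + 1)"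
  have r: "r > 0" "r * c < 1"
    using \<open>c \<ge> 0\<close> by (auto simp: r_def field_simps)
  have "0 \<le> 2 * Re (cnj (- (of_real r * a)) * a) + (cmod (- (of_real r * a)))\<^sup>2 * c"
    by (rule nonneg)
  also have "\<dots> = (cmod a)\<^sup>2 * r * (r * c - 2)"
    using r(1) by (simp add: norm_mult power_mult_distrib cmod_power2)
      (simp add: power2_eq_square algebra_simps)
  finally have "0 \<le> (cmod a)\<^sup>2 * r * (r * c - 2)" .
  moreover have "r * c - 2 < 0" "(cmod a)\<^sup>2 * r \<ge> 0"
    using r by simp_all
  ultimately have "(cmod a)\<^sup>2 * r * (r * c - 2) = 0"
    using mult_nonneg_nonpos[of "(cmod a)\<^sup>2 * r" "r * c - 2"] by linarith
  thus ?thesis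
    using r by simp
qed

lemma clinear_add: "clinear T \<Longrightarrow> T (x + y) = T x + T y"
  by (simp add: clinear_def)

lemma clinear_scaleC: "clinear T \<Longrightarrow> T (c *\<^sub>C x) = c *\<^sub>C T x"
  by (simp add: clinear_def)

lemma clinear_diff: "clinear T \<Longrightarrow> T (x - y) = T x - T y"
  by (metis clinear_add eq_diff_eq)

lemma csubspace_0: "csubspace S \<Longrightarrow> 0 \<in> S"
  by (simp add: csubspace_def)

lemma csubspace_add: "csubspace S \<Longrightarrow> x \<in> S \<Longrightarrow> y \<in> S \<Longrightarrow> x + y \<in> S"
  by (simp add: csubspace_def)

lemma csubspace_scaleC: "csubspace S \<Longrightarrow> x \<in> S \<Longrightarrow> c *\<^sub>C x \<in> S"
  by (simp add: csubspace_def)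

lemma csubspace_diff: "csubspace S \<Longrightarrow> x \<in> S \<Longrightarrow> y \<in> S \<Longrightarrow> x - y \<in> S"
  by (metis csubspace_add csubspace_scaleC scaleC_minus1_left diff_conv_add_uminus)

lemma csubspace_ball_reflect:
  assumes "csubspace S" "c \<in> S"
  shows "(\<forall>s\<in>S. P (c - s)) \<longleftrightarrow> (\<forall>s\<in>S. P s)"
proof
  assume reflected: "\<forall>s\<in>S. P (c - s)"
  show "\<forall>s\<in>S. P s"
  proof
    fix s assume "s \<in> S"
    hence "P (c - (c - s))"
      using reflected csubspace_diff[OF assms] by blast
    thus "P s"
      by simp
  qed
qed (simp add: csubspace_diff[OF assms])

lemma csubspace_imp_convex: "csubspace S \<Longrightarrow> convex S"
  by (simp add: convex_def csubspace_add csubspace_scaleC scaleR_scaleC)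

section \<open>Positive operators\<close>

lemma positive_op_clinear: "positive_op A \<Longrightarrow> clinear A"
  by (simp add: positive_op_def bounded_clinear_def)

lemma positive_op_self_adjoint:
  assumes "positive_op A"
  shows "cinner (A x) y = cinner x (A y)"
proof -
  have lin: "clinear A"
    using assms by (rule positive_op_clinear)
  have real: "Im (cinner (A z) z) = 0" for z
    using assms by (simp add: positive_op_def)
  define a where "a = cinner (A x) y"
  define b where "b = cinner (A y) x"
  have form: "cinner (A (x + t *\<^sub>C y)) (x + t *\<^sub>C y)
      = cinner (A x) x + cnj t * a + t * b + t * cnj t * cinner (A y) y" for t
    unfolding a_def b_def clinear_add[OF lin] clinear_scaleC[OF lin] by (rule cinner_add_scaleC)
  \<comment> \<open>polarization: the forms at \<open>x + y\<close> and \<open>x + \<i> y\<close> are real\<close>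
  have "Im a + Im b = 0"
    using real[of "x + 1 *\<^sub>C y"] real[of x] real[of y] unfolding form by simp
  moreover have "Re b - Re a = 0"
    using real[of "x + \<i> *\<^sub>C y"] real[of x] real[of y] unfolding form by simp
  ultimately have "a = cnj b"
    by (intro complex_eqI) auto
  thus ?thesis
    by (simp add: a_def b_def cinner_commute[of x])
qed

lemma positive_op_form_expand:
  assumes "positive_op A"
  shows "Re (cinner (A (e + t *\<^sub>C s)) (e + t *\<^sub>C s))
           = Re (cinner (A e) e) + 2 * Re (cnj t * cinner (A e) s) + (cmod t)\<^sup>2 * Re (cinner (A s) s)"
proof -
  have lin: "clinear A"
    using assms by (rule positive_op_clinear)
  have "cinner (A (e + t *\<^sub>C s)) (e + t *\<^sub>C s)
      = cinner (A e) e + cnj t * cinner (A e) s + t * cinner (A s) e + t * cnj t * cinner (A s) s"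
    unfolding clinear_add[OF lin] clinear_scaleC[OF lin] by (rule cinner_add_scaleC)
  also have "cinner (A s) e = cnj (cinner (A e) s)"
    by (simp add: positive_op_self_adjoint[OF assms] cinner_commute[of s])
  finally show ?thesis
    by (simp only: Re_quadratic_expand)
qed

lemma positive_op_min_iff_orthogonal:
  assumes A: "positive_op A" and S: "csubspace S"
  shows "(\<forall>s\<in>S. Re (cinner (A e) e) \<le> Re (cinner (A (e + s)) (e + s)))
           \<longleftrightarrow> (\<forall>s\<in>S. cinner (A e) s = 0)"
proof
  assume min: "\<forall>s\<in>S. Re (cinner (A e) e) \<le> Re (cinner (A (e + s)) (e + s))"
  show "\<forall>s\<in>S. cinner (A e) s = 0"
  proof
    fix s assume "s \<in> S"
    show "cinner (A e) s = 0"
    proof (rule first_variation_nonneg_imp_zero)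
      show "0 \<le> Re (cinner (A s) s)"
        using A by (simp add: positive_op_def)
      fix t
      have "t *\<^sub>C s \<in> S"
        using S \<open>s \<in> S\<close> by (rule csubspace_scaleC)
      with min show "0 \<le> 2 * Re (cnj t * cinner (A e) s) + (cmod t)\<^sup>2 * Re (cinner (A s) s)"
        by (fastforce simp: positive_op_form_expand[OF A])
    qed
  qed
next
  assume orth: "\<forall>s\<in>S. cinner (A e) s = 0"
  show "\<forall>s\<in>S. Re (cinner (A e) e) \<le> Re (cinner (A (e + s)) (e + s))"
  proof
    fix s assume "s \<in> S"
    have "Re (cinner (A (e + s)) (e + s)) = Re (cinner (A e) e) + Re (cinner (A s) s)"
      using positive_op_form_expand[OF A, of e 1 s] orth \<open>s \<in> S\<close> by (simp add: scaleC_one)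
    thus "Re (cinner (A e) e) \<le> Re (cinner (A (e + s)) (e + s))"
      using A by (simp add: positive_op_def)
  qed
qed

lemma positive_op_eq_0_if_form_eq_0:
  assumes A: "positive_op A" and "cinner (A w) w = 0"
  shows "A w = 0"
proof -
  have "\<forall>s\<in>UNIV. Re (cinner (A w) w) \<le> Re (cinner (A (w + s)) (w + s))"
    using A \<open>cinner (A w) w = 0\<close> by (simp add: positive_op_def)
  moreover have "csubspace (UNIV :: 'a set)"
    by (simp add: csubspace_def)
  ultimately have "cinner (A w) (A w) = 0"
    using positive_op_min_iff_orthogonal[OF A] by blast
  thus ?thesis
    by (simp add: cinner_self_eq_zero)
qed

lemma positive_op_id: "positive_op id"
proof -
  have "bounded_clinear (id :: 'a \<Rightarrow> 'a)"
    unfolding bounded_clinear_def clinear_def by (simp add: exI[of _ 1])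
  moreover have "Im (cinner x x) = 0" for x :: 'a
    using arg_cong[OF cinner_commute[of x x], of Im] by simp
  ultimately show ?thesis
    by (simp add: positive_op_def cinner_self_nonneg)
qed

section \<open>Nearest points and orthogonal projections\<close>

lemma parallelogram_law:
  fixes a b :: "'a::complex_inner"
  shows "(norm (a - b))\<^sup>2 + (norm (a + b))\<^sup>2 = 2 * (norm a)\<^sup>2 + 2 * (norm b)\<^sup>2"
  by (simp add: power2_norm_eq_cinner cinner_add_left cinner_add_right cinner_diff_left
      cinner_diff_right)

lemma convex_dist_le_by_midpoint:
  fixes x :: "'a::complex_inner"
  assumes "convex S" "a \<in> S" "b \<in> S" and d: "0 \<le> d" "\<forall>s\<in>S. d \<le> dist x s"
  shows "(dist a b)\<^sup>2 \<le> 2 * (dist x a)\<^sup>2 + 2 * (dist x b)\<^sup>2 - 4 * d\<^sup>2"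
proof -
  have "midpoint a b \<in> S"
    using assms(1-3) unfolding convex_contains_segment by (meson midpoint_in_closed_segment subsetD)
  hence "d\<^sup>2 \<le> (dist x (midpoint a b))\<^sup>2"
    using d by (simp add: power_mono)
  moreover have "norm ((x - a) + (x - b)) = 2 * dist x (midpoint a b)"
  proof -
    have "(x - a) + (x - b) = 2 *\<^sub>R (x - midpoint a b)"
      unfolding midpoint_def scaleR_right_diff_distrib by (simp add: scaleR_2)
    thus ?thesis
      by (simp add: dist_norm)
  qed
  moreover have "norm ((x - a) - (x - b)) = dist a b"
    by (simp add: dist_norm norm_minus_commute)
  ultimately show ?thesis
    using parallelogram_law[of "x - a" "x - b"] by (simp add: dist_norm power_mult_distrib)
qed

lemma convex_minimising_sequence_Cauchy:
  fixes x :: "'a::complex_inner"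
  assumes "convex S" and q: "\<And>n. q n \<in> S" and d: "0 \<le> d" "\<forall>s\<in>S. d \<le> dist x s"
    and lim_dist: "(\<lambda>n. dist x (q n)) \<longlonglongrightarrow> d"
  shows "Cauchy q"
proof (rule metric_CauchyI)
  fix \<epsilon> :: real assume "\<epsilon> > 0"
  have "(\<lambda>n. (dist x (q n))\<^sup>2) \<longlonglongrightarrow> d\<^sup>2"
    using lim_dist by (rule tendsto_power)
  moreover have "d\<^sup>2 < d\<^sup>2 + \<epsilon>\<^sup>2 / 4"
    using \<open>\<epsilon> > 0\<close> by simp
  ultimately have "\<forall>\<^sub>F n in sequentially. (dist x (q n))\<^sup>2 < d\<^sup>2 + \<epsilon>\<^sup>2 / 4"
    by (rule order_tendstoD(2))
  then obtain N where N: "\<And>n. n \<ge> N \<Longrightarrow> (dist x (q n))\<^sup>2 < d\<^sup>2 + \<epsilon>\<^sup>2 / 4"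
    unfolding eventually_sequentially by blast
  have "dist (q m) (q n) < \<epsilon>" if "m \<ge> N" "n \<ge> N" for m n
  proof -
    have "(dist (q m) (q n))\<^sup>2 < \<epsilon>\<^sup>2"
      using convex_dist_le_by_midpoint[OF \<open>convex S\<close> q[of m] q[of n] d] N[OF that(1)] N[OF that(2)]
      by linarith
    thus ?thesis
      using \<open>\<epsilon> > 0\<close> by (simp add: power_less_imp_less_base)
  qed
  thus "\<exists>N. \<forall>m\<ge>N. \<forall>n\<ge>N. dist (q m) (q n) < \<epsilon>"
    by blast
qed

lemma closed_convex_nearest_point_exists:
  fixes x :: "'a::complex_hilbert"
  assumes "closed S" "convex S" "S \<noteq> {}"
  shows "\<exists>p\<in>S. \<forall>q\<in>S. dist x p \<le> dist x q"
proof -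
  define d where "d = infdist x S"
  have d: "0 \<le> d" "\<forall>s\<in>S. d \<le> dist x s"
    by (simp_all add: d_def infdist_nonneg infdist_le)
  have "\<exists>s\<in>S. dist x s < d + inverse (real (Suc n))" for n
  proof -
    have "(INF s\<in>S. dist x s) < d + inverse (real (Suc n))"
      using \<open>S \<noteq> {}\<close> by (simp add: d_def infdist_notempty)
    thus ?thesis
      using \<open>S \<noteq> {}\<close> by (subst (asm) cINF_less_iff) (auto intro: bdd_belowI2[of _ 0])
  qed
  then obtain q where q: "\<And>n. q n \<in> S" "\<And>n. dist x (q n) < d + inverse (real (Suc n))"
    by metis
  have lim_dist: "(\<lambda>n. dist x (q n)) \<longlonglongrightarrow> d"
  proof (rule real_tendsto_sandwich[where f = "\<lambda>n. d" and h = "\<lambda>n. d + inverse (real (Suc n))"])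
    show "\<forall>\<^sub>F n in sequentially. d \<le> dist x (q n)"
      using d q by simp
    show "\<forall>\<^sub>F n in sequentially. dist x (q n) \<le> d + inverse (real (Suc n))"
      using q by (simp add: less_imp_le)
    show "(\<lambda>n. d + inverse (real (Suc n))) \<longlonglongrightarrow> d"
      using tendsto_add[OF tendsto_const LIMSEQ_inverse_real_of_nat, of d] by simp
  qed simp
  have "Cauchy q"
    using \<open>convex S\<close> q(1) d lim_dist by (rule convex_minimising_sequence_Cauchy)
  then obtain p where "q \<longlonglongrightarrow> p"
    using Cauchy_convergent_iff convergent_def by blast
  hence "p \<in> S" and "(\<lambda>n. dist x (q n)) \<longlonglongrightarrow> dist x p"
    using closed_sequentially[OF \<open>closed S\<close> q(1)] by (auto intro: tendsto_intros)
  hence "dist x p = d"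
    using lim_dist LIMSEQ_unique by blast
  thus ?thesis
    using \<open>p \<in> S\<close> d by auto
qed

lemma orthogonal_foot_unique:
  assumes "csubspace S" "p \<in> S" "\<forall>s\<in>S. cinner (x - p) s = 0" "q \<in> S" "\<forall>s\<in>S. cinner (x - q) s = 0"
  shows "p = q"
proof -
  have "p - q \<in> S"
    using assms by (simp add: csubspace_diff)
  hence "cinner (x - q) (p - q) - cinner (x - p) (p - q) = 0"
    using assms by simp
  hence "cinner (p - q) (p - q) = 0"
    by (simp add: cinner_diff_left[symmetric])
  thus ?thesis
    by (simp add: cinner_self_eq_zero)
qed

lemma cproj_orthogonal:
  fixes x :: "'a::complex_hilbert"
  assumes S: "csubspace S" "closed S"
  shows "cproj S x \<in> S" "\<forall>s\<in>S. cinner (x - cproj S x) s = 0"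
proof -
  obtain p where "p \<in> S" and nearest: "\<forall>q\<in>S. dist x p \<le> dist x q"
    using closed_convex_nearest_point_exists[OF S(2) csubspace_imp_convex[OF S(1)]]
      csubspace_0[OF S(1)] by blast
  have "\<forall>s\<in>S. Re (cinner (x - p) (x - p)) \<le> Re (cinner (x - p + s) (x - p + s))"
  proof
    fix s assume "s \<in> S"
    hence "dist x p \<le> dist x (p - s)"
      using nearest \<open>p \<in> S\<close> S(1) csubspace_diff by blast
    also have "dist x (p - s) = norm (x - p + s)"
      by (simp add: dist_norm diff_diff_eq2 diff_add_eq)
    finally have "(norm (x - p))\<^sup>2 \<le> (norm (x - p + s))\<^sup>2"
      by (simp add: dist_norm power_mono)
    thus "Re (cinner (x - p) (x - p)) \<le> Re (cinner (x - p + s) (x - p + s))"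
      by (simp only: power2_norm_eq_cinner)
  qed
  hence orth: "\<forall>s\<in>S. cinner (x - p) s = 0"
    using positive_op_min_iff_orthogonal[OF positive_op_id S(1)] by simp
  have "cproj S x = p"
    unfolding cproj_def
    by (rule the_equality) (use \<open>p \<in> S\<close> orth orthogonal_foot_unique[OF S(1)] in blast)+
  thus "cproj S x \<in> S" "\<forall>s\<in>S. cinner (x - cproj S x) s = 0"
    using \<open>p \<in> S\<close> orth by simp_all
qed

lemma cproj_eq_cproj_iff:
  fixes u v :: "'a::complex_hilbert"
  assumes S: "csubspace S" "closed S"
  shows "cproj S u = cproj S v \<longleftrightarrow> (\<forall>s\<in>S. cinner (u - v) s = 0)"
proof
  assume eq: "cproj S u = cproj S v"
  show "\<forall>s\<in>S. cinner (u - v) s = 0"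
  proof
    fix s assume "s \<in> S"
    have "cinner (u - v) s = cinner ((u - cproj S u) - (v - cproj S v)) s"
      using eq by simp
    also have "\<dots> = cinner (u - cproj S u) s - cinner (v - cproj S v) s"
      by (rule cinner_diff_left)
    finally show "cinner (u - v) s = 0"
      using cproj_orthogonal(2)[OF S] \<open>s \<in> S\<close> by simp
  qed
next
  assume orth: "\<forall>s\<in>S. cinner (u - v) s = 0"
  have "\<forall>s\<in>S. cinner (u - cproj S v) s = 0"
  proof
    fix s assume "s \<in> S"
    have "cinner (u - cproj S v) s = cinner (u - v) s + cinner (v - cproj S v) s"
      by (simp add: cinner_add_left[symmetric])
    thus "cinner (u - cproj S v) s = 0"
      using orth cproj_orthogonal(2)[OF S, of v] \<open>s \<in> S\<close> by simp
  qed
  thus "cproj S u = cproj S v"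
    using orthogonal_foot_unique[OF S(1) cproj_orthogonal[OF S, of u]] cproj_orthogonal(1)[OF S] by blast
qed

section \<open>The adjoint\<close>

lemma complex_cauchy_schwarz: "cmod (cinner x y) \<le> norm x * norm y"
proof (cases "y = 0")
  case False
  define a where "a = cinner x y"
  define r where "r = 1 / (norm y)\<^sup>2"
  have r: "r \<ge> 0" "r * (norm y)\<^sup>2 = 1"
    using False by (simp_all add: r_def)
  have "0 \<le> Re (cinner (x + (- (of_real r * a)) *\<^sub>C y) (x + (- (of_real r * a)) *\<^sub>C y))"
    by (rule cinner_self_nonneg)
  also have "\<dots> = (norm x)\<^sup>2 - 2 * r * (cmod a)\<^sup>2 + r * (cmod a)\<^sup>2 * (r * (norm y)\<^sup>2)"
    using r(1) unfolding cinner_add_scaleC cinner_commute[of y x] Re_quadratic_expand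
    by (simp add: a_def power2_norm_eq_cinner norm_mult power_mult_distrib cmod_power2)
      (simp add: power2_eq_square algebra_simps)
  finally have "r * (cmod a)\<^sup>2 * (norm y)\<^sup>2 \<le> (norm x)\<^sup>2 * (norm y)\<^sup>2"
    using r(2) by (simp add: mult_right_mono)
  moreover have "r * (cmod a)\<^sup>2 * (norm y)\<^sup>2 = (cmod a)\<^sup>2"
    using r(2) by (metis mult.assoc mult.commute mult_1_right)
  ultimately have "(cmod a)\<^sup>2 \<le> (norm x * norm y)\<^sup>2"
    by (simp add: power_mult_distrib)
  thus ?thesis
    unfolding a_def by (rule power2_le_imp_le) simp
qed simp

lemma kernel_orthogonal_proportional:
  fixes f :: "'a::complex_inner \<Rightarrow> complex"
  assumes add: "\<And>x y. f (x + y) = f x + f y" and scale: "\<And>c x. f (c *\<^sub>C x) = c * f x"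
    and orth: "\<forall>s. f s = 0 \<longrightarrow> cinner w s = 0"
  shows "f x * cinner w w = f w * cinner x w"
proof -
  define v where "v = f x *\<^sub>C w - f w *\<^sub>C x"
  have "f (a - b) = f a - f b" for a b
    by (metis add diff_add_cancel eq_diff_eq)
  hence "f v = 0"
    by (simp add: v_def scale mult.commute)
  hence "cinner v w = 0"
    using orth by (metis cinner_commute complex_cnj_zero)
  thus ?thesis
    by (simp add: v_def cinner_diff_left cinner_scaleC_left)
qed

lemma riesz_representation:
  fixes f :: "'a::complex_hilbert \<Rightarrow> complex"
  assumes add: "\<And>x y. f (x + y) = f x + f y" and scale: "\<And>c x. f (c *\<^sub>C x) = c * f x"
    and bounded: "\<And>x. cmod (f x) \<le> norm x * K"
  shows "\<exists>z. \<forall>x. f x = cinner x z"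
proof (cases "\<forall>x. f x = 0")
  case True
  thus ?thesis
    by (intro exI[of _ 0]) simp
next
  case False
  then obtain u where "f u \<noteq> 0"
    by blast
  define N where "N = {x. f x = 0}"
  have f_diff: "f (x - y) = f x - f y" for x y
    by (metis add diff_add_cancel eq_diff_eq)
  have "f 0 = 0"
    using add[of 0 0] by simp
  hence N: "csubspace N"
    unfolding N_def csubspace_def using add scale by simp
  have "bounded_linear f"
    by (rule bounded_linear_intro[where K = K])
      (simp_all add: add bounded scaleR_scaleC scale scaleR_conv_of_real)
  hence "closed N"
    unfolding N_def by (intro closed_Collect_eq) (auto simp: linear_continuous_on)
  define w where "w = u - cproj N u"
  have w_orth: "\<forall>s\<in>N. cinner w s = 0"
    using cproj_orthogonal(2)[OF N \<open>closed N\<close>] by (simp add: w_def)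
  have "f w = f u"
    using cproj_orthogonal(1)[OF N \<open>closed N\<close>] by (simp add: w_def f_diff N_def)
  hence "cinner w w \<noteq> 0"
    using \<open>f u \<noteq> 0\<close> \<open>f 0 = 0\<close> by (auto simp: cinner_self_eq_zero)
  have "f x * cinner w w = f w * cinner x w" for x
    using w_orth unfolding N_def by (intro kernel_orthogonal_proportional add scale) blast
  hence "f x = cinner x (cnj (f w / cinner w w) *\<^sub>C w)" for x
    using \<open>cinner w w \<noteq> 0\<close> by (simp add: cinner_scaleC_right field_simps)
  thus ?thesis
    by blast
qed

lemma cinner_cadjoint:
  fixes T :: "'a::complex_hilbert \<Rightarrow> 'a"
  assumes "bounded_clinear T"
  shows "cinner (T x) y = cinner x (cadjoint T y)"
proof -
  obtain K where K: "\<And>x. norm (T x) \<le> norm x * K" and lin: "clinear T"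
    using assms unfolding bounded_clinear_def by blast
  have "\<exists>z. \<forall>x. cinner (T x) y = cinner x z" for y
  proof (rule riesz_representation[where K = "K * norm y"])
    show "cinner (T (x + x')) y = cinner (T x) y + cinner (T x') y" for x x'
      by (simp add: clinear_add[OF lin] cinner_add_left)
    show "cinner (T (c *\<^sub>C x)) y = c * cinner (T x) y" for c x
      by (simp add: clinear_scaleC[OF lin] cinner_scaleC_left)
    show "cmod (cinner (T x) y) \<le> norm x * (K * norm y)" for x
      using complex_cauchy_schwarz[of "T x" y] mult_right_mono[OF K[of x] norm_ge_zero[of y]]
      by (simp add: mult.assoc)
  qed
  then obtain S where S: "\<forall>x y. cinner (T x) y = cinner x (S y)"
    by metis
  have "\<forall>x y. cinner (T x) y = cinner x (cadjoint T y)"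
    unfolding cadjoint_def
  proof (rule theI[of _ S])
    fix S' assume S': "\<forall>x y. cinner (T x) y = cinner x (S' y)"
    show "S' = S"
      by (rule ext, rule cinner_left_ext) (metis S S' cinner_commute)
  qed (use S in blast)
  thus ?thesis
    by blast
qed

lemma cinner_cadjoint_left:
  fixes T :: "'a::complex_hilbert \<Rightarrow> 'a"
  assumes "bounded_clinear T"
  shows "cinner (cadjoint T y) x = cinner y (T x)"
  by (metis assms cinner_cadjoint cinner_commute)

section \<open>\<open>A\<close>-projections\<close>

definition A_orthogonal_residual :: "('a::complex_inner \<Rightarrow> 'a) \<Rightarrow> 'a set \<Rightarrow> ('a \<Rightarrow> 'a) \<Rightarrow> bool"
  where "A_orthogonal_residual A S T \<longleftrightarrow> (\<forall>y. \<forall>s\<in>S. cinner (A (y - T y)) s = 0)"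

lemma A_orthogonal_residualD:
  assumes "A_orthogonal_residual A S T" "clinear A" "s \<in> S"
  shows "cinner (A (T y)) s = cinner (A y) s"
proof -
  have "cinner (A y) s - cinner (A (T y)) s = 0"
    using assms by (simp only: A_orthogonal_residual_def clinear_diff cinner_diff_left[symmetric])
  thus ?thesis
    by simp
qed

lemma A_projection_iff_A_orthogonal_residual:
  assumes A: "positive_op A" and S: "csubspace S" and T: "bounded_clinear T" "range T \<subseteq> S"
  shows "A_projection A S T \<longleftrightarrow> A_orthogonal_residual A S T"
proof -
  have "(\<forall>s\<in>S. A_norm A (y - T y) \<le> A_norm A (y - s))
      \<longleftrightarrow> (\<forall>s\<in>S. cinner (A (y - T y)) s = 0)" for y
  proof -
    define e where "e = y - T y"
    have "T y \<in> S"
      using T(2) by blast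
    have "(\<forall>s\<in>S. A_norm A e \<le> A_norm A (y - s))
        \<longleftrightarrow> (\<forall>s\<in>S. A_norm A e \<le> A_norm A (e + (T y - s)))"
      by (simp add: e_def)
    also have "\<dots> \<longleftrightarrow> (\<forall>s\<in>S. A_norm A e \<le> A_norm A (e + s))"
      by (rule csubspace_ball_reflect[OF S \<open>T y \<in> S\<close>])
    also have "\<dots> \<longleftrightarrow> (\<forall>s\<in>S. Re (cinner (A e) e) \<le> Re (cinner (A (e + s)) (e + s)))"
      by (simp add: A_norm_def)
    also have "\<dots> \<longleftrightarrow> (\<forall>s\<in>S. cinner (A e) s = 0)"
      by (rule positive_op_min_iff_orthogonal[OF A S])
    finally show ?thesis
      by (simp add: e_def)
  qed
  hence "(\<forall>y. \<forall>s\<in>S. A_norm A (y - T y) \<le> A_norm A (y - s)) \<longleftrightarrow> A_orthogonal_residual A S T"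
    unfolding A_orthogonal_residual_def by blast
  thus ?thesis
    unfolding A_projection_def using T by blast
qed

lemma cproj_comp_eq_iff_A_orthogonal_residual:
  fixes A T :: "'a::complex_hilbert \<Rightarrow> 'a"
  assumes "clinear A" and S: "csubspace S" "closed S"
  shows "cproj S \<circ> A \<circ> T = cproj S \<circ> A \<longleftrightarrow> A_orthogonal_residual A S T"
proof -
  have "cproj S \<circ> A \<circ> T = cproj S \<circ> A \<longleftrightarrow> (\<forall>y. cproj S (A y) = cproj S (A (T y)))"
    unfolding fun_eq_iff comp_apply by (blast intro: sym)
  also have "\<dots> \<longleftrightarrow> A_orthogonal_residual A S T"
    unfolding cproj_eq_cproj_iff[OF S] A_orthogonal_residual_def clinear_diff[OF \<open>clinear A\<close>] ..
  finally show ?thesis .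
qed

lemma A_orthogonal_residual_imp_A_selfadjoint:
  fixes A T :: "'a::complex_hilbert \<Rightarrow> 'a"
  assumes res: "A_orthogonal_residual A S T" and A: "positive_op A"
    and T: "bounded_clinear T" "range T \<subseteq> S"
  shows "A \<circ> T = cadjoint T \<circ> A"
proof
  fix x
  have lin: "clinear A"
    using A by (rule positive_op_clinear)
  have TS: "T z \<in> S" for z
    using T(2) by blast
  show "(A \<circ> T) x = (cadjoint T \<circ> A) x"
  proof (simp, rule cinner_left_ext)
    fix y
    have "cinner (A (T x)) y = cinner (T x) (A y)"
      by (rule positive_op_self_adjoint[OF A])
    also have "\<dots> = cinner (T x) (A (T y))"
      using A_orthogonal_residualD[OF res lin TS, of y x] by (metis cinner_commute)
    also have "\<dots> = cinner (A (T x)) (T y)"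
      by (rule positive_op_self_adjoint[OF A, symmetric])
    also have "\<dots> = cinner (A x) (T y)"
      by (rule A_orthogonal_residualD[OF res lin TS])
    also have "\<dots> = cinner (cadjoint T (A x)) y"
      by (rule cinner_cadjoint_left[OF T(1), symmetric])
    finally show "cinner (A (T x)) y = cinner (cadjoint T (A x)) y" .
  qed
qed

lemma A_orthogonal_residual_imp_A_comp_cproj_eq:
  fixes A T :: "'a::complex_hilbert \<Rightarrow> 'a"
  assumes res: "A_orthogonal_residual A S T" and A: "positive_op A"
    and S: "csubspace S" "closed S" and T: "range T \<subseteq> S"
  shows "A \<circ> T \<circ> cproj S = A \<circ> cproj S"
proof
  fix x
  define w where "w = cproj S x - T (cproj S x)"
  have "w \<in> S"
    using T cproj_orthogonal(1)[OF S] csubspace_diff[OF S(1)] by (auto simp: w_def)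
  hence "cinner (A w) w = 0"
    using res by (simp add: A_orthogonal_residual_def w_def)
  hence "A w = 0"
    by (rule positive_op_eq_0_if_form_eq_0[OF A])
  thus "(A \<circ> T \<circ> cproj S) x = (A \<circ> cproj S) x"
    by (simp add: w_def clinear_diff[OF positive_op_clinear[OF A]])
qed

lemma A_adjoint_conditions_imp_A_orthogonal_residual:
  fixes A T :: "'a::complex_hilbert \<Rightarrow> 'a"
  assumes A: "positive_op A" and S: "csubspace S" "closed S" and T: "bounded_clinear T"
    and adj: "A \<circ> T = cadjoint T \<circ> A" and fix_range: "A \<circ> T \<circ> cproj S = A \<circ> cproj S"
  shows "A_orthogonal_residual A S T"
  unfolding A_orthogonal_residual_def
proof (intro allI ballI)
  fix y s assume "s \<in> S"
  have "A (T s) = A s"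
    using fun_cong[OF fix_range, of s] orthogonal_foot_unique[OF S(1) cproj_orthogonal[OF S, of s]]
      \<open>s \<in> S\<close> by simp
  have "cinner (A (T y)) s = cinner (cadjoint T (A y)) s"
    using fun_cong[OF adj, of y] by simp
  also have "\<dots> = cinner (A y) (T s)"
    by (rule cinner_cadjoint_left[OF T])
  also have "\<dots> = cinner y (A (T s))"
    by (rule positive_op_self_adjoint[OF A])
  also have "\<dots> = cinner (A y) s"
    by (simp add: \<open>A (T s) = A s\<close> positive_op_self_adjoint[OF A])
  finally show "cinner (A (y - T y)) s = 0"
    by (simp add: clinear_diff[OF positive_op_clinear[OF A]] cinner_diff_left)
qed

theorem mainTheorem1:
  fixes A T :: "'a::complex_hilbert \<Rightarrow> 'a" and S :: "'a set"
  assumes "separable_space (euclidean :: 'a topology)"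
    and "positive_op A"
    and "csubspace S" and "closed S"
    and "bounded_clinear T" and "range T \<subseteq> S"
  shows "(A_projection A S T \<longleftrightarrow>
            (A \<circ> T = cadjoint T \<circ> A \<and> A \<circ> T \<circ> cproj S = A \<circ> cproj S))
       \<and> (A_projection A S T \<longleftrightarrow> cproj S \<circ> A \<circ> T = cproj S \<circ> A)"
proof -
  have proj: "A_projection A S T \<longleftrightarrow> A_orthogonal_residual A S T"
    using assms(2-6) by (intro A_projection_iff_A_orthogonal_residual)
  have "A_orthogonal_residual A S T
      \<longleftrightarrow> A \<circ> T = cadjoint T \<circ> A \<and> A \<circ> T \<circ> cproj S = A \<circ> cproj S"
  proof
    assume res: "A_orthogonal_residual A S T"
    show "A \<circ> T = cadjoint T \<circ> A \<and> A \<circ> T \<circ> cproj S = A \<circ> cproj S"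
      using A_orthogonal_residual_imp_A_selfadjoint[OF res assms(2,5,6)]
        A_orthogonal_residual_imp_A_comp_cproj_eq[OF res assms(2-4,6)] by blast
  qed (use A_adjoint_conditions_imp_A_orthogonal_residual[OF assms(2-5)] in blast)
  moreover have "cproj S \<circ> A \<circ> T = cproj S \<circ> A \<longleftrightarrow> A_orthogonal_residual A S T"
    using assms(2-4) by (intro cproj_comp_eq_iff_A_orthogonal_residual positive_op_clinear)
  ultimately show ?thesis
    using proj by blast
qed

end
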